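(* Let $M,N$ be weights of $\mathbb{R}^m,\mathbb{R}^n$, let $A\in\mathbb{R}^{m\times n}$ with $MA=AN$, and let $K\subseteq\mathbb{R}^n$ be a closed cone. If $$(A^{[*]}\circ A)^{[\dagger]}\circ K^{[*]}\subseteq K+\mathcal{N}(A\circ I),$$ then $$K^{[*]}\cap\mathcal{R}\big((A\circ I)^{[*]}\big)\subseteq A^{[*]}\circ A\circ K+\mathcal{N}(A\circ I).$$
   Context: A weight is a real symmetric matrix $W$ with $W^2=I$. $\mathbb{R}^m$ and $\mathbb{R}^n$ carry weights $M\in\mathbb{R}^{m\times m}$ and $N\in\mathbb{R}^{n\times n}$, respectively. The indefinite inner product on the space with weight $W$ is $[x,y]=\langle x,Wy\rangle$. Indefinite matrix product: if $B$ has $p$ columns and $C$ has $p$ rows (or is a vector in $\mathbb{R}^p$), $p\in\{m,n\}$, and $W$ is the weight of $\mathbb{R}^p$, then $B\circ C:=BWC$. $I$ denotes an identity matrix of the appropriate size. Indefinite adjoint of $B\in\mathbb{R}^{p\times q}$: $B^{[*]}:=W_qB^TW_p$, where $W_p,W_q$ are the weights of $\mathbb{R}^p,\mathbb{R}^q$. Indefinite Moore–Penrose inverse: for $B\in\mathbb{R}^{p\times q}$, $B^{[\dagger]}$ is the unique $X\in\mathbb{R}^{q\times p}$ such that - $B\circ X\circ B=B$, - $X\circ B\circ X=X$, - $(B\circ X)^{[*]}=B\circ X$, - $(X\circ B)^{[*]}=X\circ B$. It equals $W_qB^\dagger W_p$. Range and null space: for a matrix $B$ with $q$ columns, $\mathcal{R}(B)=\{B\circ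 x:x\in\mathbb{R}^q\}$ and $\mathcal{N}(B)=\{x\in\mathbb{R}^q:B\circ x=0\}$. A cone is a nonempty set closed under addition and under multiplication by nonnegative scalars. For $S$ a subset of $\mathbb{R}^p$ with weight $W$, the dual is $S^{[*]}=\{x\in\mathbb{R}^p:[x,t]\ge0\ \forall t\in S\}$. For a matrix $B$ and a set $S$, $B\circ S=\{B\circ s:s\in S\}$. The sum of sets is the Minkowski sum. *)

theory Defs
  imports "HOL-Analysis.Analysis"
begin

definition weight :: "real^'p^'p \<Rightarrow> bool" where
  "weight W \<longleftrightarrow> transpose W = W \<and> W ** W = mat 1"

text \<open>Indefinite matrix product B o C := B W C, where W is the weight of the
  space indexed by the columns of B (= rows of C).\<close>
definition iprod :: "real^'p^'p \<Rightarrow> real^'p^'r \<Rightarrow> real^'q^'p \<Rightarrow> real^'q^'r" where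
  "iprod W B C = B ** W ** C"

definition iprodv :: "real^'p^'p \<Rightarrow> real^'p^'r \<Rightarrow> real^'p \<Rightarrow> real^'r" where
  "iprodv W B x = B *v (W *v x)"

definition iadj :: "real^'p^'p \<Rightarrow> real^'q^'q \<Rightarrow> real^'q^'p \<Rightarrow> real^'p^'q" where
  "iadj Wp Wq B = Wq ** transpose B ** Wp"

definition impinv :: "real^'p^'p \<Rightarrow> real^'q^'q \<Rightarrow> real^'q^'p \<Rightarrow> real^'p^'q" where
  "impinv Wp Wq B = (THE X.
      iprod Wp (iprod Wq B X) B = B \<and>
      iprod Wq (iprod Wp X B) X = X \<and>
      iadj Wp Wp (iprod Wq B X) = iprod Wq B X \<and>
      iadj Wq Wq (iprod Wp X B) = iprod Wp X B)"

definition irange :: "real^'q^'q \<Rightarrow> real^'q^'p \<Rightarrow> (real^'p) set" where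
  "irange Wq B = {iprodv Wq B x | x. True}"

definition inull :: "real^'q^'q \<Rightarrow> real^'q^'p \<Rightarrow> (real^'q) set" where
  "inull Wq B = {x. iprodv Wq B x = 0}"

definition is_cone :: "(real^'p) set \<Rightarrow> bool" where
  "is_cone K \<longleftrightarrow> K \<noteq> {} \<and> (\<forall>x\<in>K. \<forall>y\<in>K. x + y \<in> K) \<and>
                 (\<forall>c::real. c \<ge> 0 \<longrightarrow> (\<forall>x\<in>K. c *\<^sub>R x \<in> K))"

definition idual :: "real^'p^'p \<Rightarrow> (real^'p) set \<Rightarrow> (real^'p) set" where
  "idual W S = {x. \<forall>t\<in>S. inner x (W *v t) \<ge> 0}"

definition iimage :: "real^'p^'p \<Rightarrow> real^'p^'r \<Rightarrow> (real^'p) set \<Rightarrow> (real^'r) set" where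
  "iimage W B S = (\<lambda>s. iprodv W B s) ` S"

definition msum :: "('a::plus) set \<Rightarrow> 'a set \<Rightarrow> 'a set" where
  "msum S T = {s + t | s t. s \<in> S \<and> t \<in> T}"

end

theory Submission
  imports Defs
begin

text \<open>Write \<open>B = N A\<^sup>T A\<close> for the indefinite Gram matrix \<open>A\<^sup>[\<^sup>*\<^sup>] \<circ> A\<close> and \<open>X\<close> for its
  indefinite Moore--Penrose inverse. The range of \<open>(A \<circ> I)\<^sup>[\<^sup>*\<^sup>]\<close> is that of \<open>A\<^sup>T\<close>, which
  equals the range of \<open>A\<^sup>T A\<close> and, because \<open>M A = A N\<close> gives \<open>N A\<^sup>T = A\<^sup>T M\<close>, lies in
  the range of \<open>B\<close>; so \<open>B \<circ> X \<circ> y = y\<close> there. The hypothesis splits \<open>X \<circ> y = k + z\<close>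
  with \<open>k \<in> K\<close> and \<open>A z = 0\<close>, and \<open>A z = 0\<close> forces \<open>B \<circ> z = 0\<close>; hence \<open>y = B \<circ> k\<close>.

  The indefinite Moore--Penrose inverse is \<open>N B\<^sup>\<dagger> N\<close>, so its existence and uniqueness
  come down to those of the ordinary one, which is built by Urquhart's formula from
  solutions of the normal equations.\<close>

lemma inner_transpose_mult: "inner (transpose B *v x) y = inner x (B *v (y::real^'n))"
  by (simp add: dot_lmul_matrix[symmetric])

lemma normal_equation_solvable:
  fixes B :: "real^'n^'m"
  shows "\<exists>u. transpose B *v (B *v u) = transpose B *v x"
proof -
  let ?R = "range ((*v) B)"
  obtain y z where y: "y \<in> span ?R" and z: "\<And>w. w \<in> span ?R \<Longrightarrow> orthogonal z w"
    and x: "x = y + z"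
    using orthogonal_subspace_decomp_exists by blast
  have "subspace ?R"
    by (rule linear_subspace_image[OF matrix_vector_mul_linear subspace_UNIV])
  with y obtain u where u: "y = B *v u"
    by (metis span_eq_iff imageE)
  have "inner (transpose B *v z) (transpose B *v z) = inner z (B *v (transpose B *v z))"
    by (rule inner_transpose_mult)
  also have "\<dots> = 0"
    using z[of "B *v (transpose B *v z)"] by (simp add: span_base orthogonal_def)
  finally have "transpose B *v z = 0" by simp
  then have "transpose B *v (B *v u) = transpose B *v x"
    by (simp add: x u matrix_vector_right_distrib)
  then show ?thesis ..
qed

lemma matrix_factor_through:
  fixes C :: "real^'k^'m" and D :: "real^'n^'m"
  assumes "\<And>x. \<exists>u. C *v u = D *v x"
  shows "\<exists>G. C ** G = D"
proof -
  obtain g where g: "\<And>x. C *v g x = D *v x" using assms by metis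
  have "C ** transpose (\<chi> j. g (axis j 1)) = D"
  proof (simp add: vec_eq_iff, intro allI)
    fix i j
    have "(C ** transpose (\<chi> j. g (axis j 1))) $ i $ j = (C *v g (axis j 1)) $ i"
      by (simp add: matrix_matrix_mult_def matrix_vector_mult_def transpose_def)
    also have "\<dots> = (D *v axis j 1) $ i" by (simp add: g)
    also have "\<dots> = D $ i $ j" by (simp add: matrix_vector_mult_basis column_def)
    finally show "(C ** transpose (\<chi> j. g (axis j 1))) $ i $ j = D $ i $ j" .
  qed
  then show ?thesis ..
qed

lemma normal_equation_matrix_solvable:
  fixes B :: "real^'n^'m"
  shows "\<exists>G. transpose B ** B ** G = transpose B"
  by (rule matrix_factor_through)
     (metis normal_equation_solvable matrix_vector_mul_assoc)

definition moore_penrose :: "real^'n^'m \<Rightarrow> real^'m^'n \<Rightarrow> bool" where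
  "moore_penrose B X \<longleftrightarrow> B ** X ** B = B \<and> X ** B ** X = X \<and>
     transpose (B ** X) = B ** X \<and> transpose (X ** B) = X ** B"

lemma normal_equation_solution_penrose13:
  fixes B :: "real^'n^'m"
  assumes G: "transpose B ** B ** G = transpose B"
  shows "transpose (B ** G) = B ** G" and "B ** G ** B = B"
proof -
  have Gt: "transpose G ** transpose B ** B = B"
    using arg_cong[OF G, of transpose] by (simp add: matrix_transpose_mul matrix_mul_assoc)
  have "transpose (B ** G) = transpose G ** (transpose B ** B ** G)"
    by (simp add: G matrix_transpose_mul)
  also have "\<dots> = B ** G"
    using Gt by (simp add: matrix_mul_assoc)
  finally show sym: "transpose (B ** G) = B ** G" .
  have "B ** G ** B = transpose (B ** G) ** B" by (simp add: sym)
  also have "\<dots> = B"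
    using Gt by (simp add: matrix_transpose_mul matrix_mul_assoc)
  finally show "B ** G ** B = B" .
qed

text \<open>Urquhart's formula: with least-squares inverses on both sides, \<open>H B G\<close> is the
  Moore--Penrose inverse of \<open>B\<close>.\<close>
lemma moore_penrose_exists:
  fixes B :: "real^'n^'m"
  shows "\<exists>X. moore_penrose B X"
proof -
  obtain G where G: "transpose B ** B ** G = transpose B"
    using normal_equation_matrix_solvable by blast
  obtain G' where G': "transpose (transpose B) ** transpose B ** G' = transpose (transpose B)"
    using normal_equation_matrix_solvable by blast
  define H where "H = transpose G'"
  note BG = normal_equation_solution_penrose13[OF G]
  note BG' = normal_equation_solution_penrose13[OF G']
  have HB: "transpose (H ** B) = H ** B"
    using arg_cong[OF BG'(1), of transpose] by (simp add: H_def matrix_transpose_mul)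
  have BHB: "B ** H ** B = B"
    using arg_cong[OF BG'(2), of transpose] by (simp add: H_def matrix_transpose_mul matrix_mul_assoc)
  have "moore_penrose B (H ** B ** G)"
    unfolding moore_penrose_def
  proof (intro conjI)
    show "B ** (H ** B ** G) ** B = B"
      using BHB BG(2) by (simp flip: matrix_mul_assoc)
    show "H ** B ** G ** B ** (H ** B ** G) = H ** B ** G"
      using BHB BG(2) by (metis matrix_mul_assoc)
    show "transpose (B ** (H ** B ** G)) = B ** (H ** B ** G)"
      using BHB BG(1) by (metis matrix_mul_assoc)
    show "transpose (H ** B ** G ** B) = H ** B ** G ** B"
      using HB BG(2) by (metis matrix_mul_assoc)
  qed
  then show ?thesis ..
qed

lemma moore_penrose_unique:
  fixes B :: "real^'n^'m" and X Z :: "real^'m^'n"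
  assumes "moore_penrose B X" and "moore_penrose B Z"
  shows "X = Z"
proof -
  from assms have x1: "B ** X ** B = B" and x2: "X ** B ** X = X"
    and x3: "transpose (B ** X) = B ** X" and x4: "transpose (X ** B) = X ** B"
    and z1: "B ** Z ** B = B" and z2: "Z ** B ** Z = Z"
    and z3: "transpose (B ** Z) = B ** Z" and z4: "transpose (Z ** B) = Z ** B"
    unfolding moore_penrose_def by auto
  have "X = X ** (B ** X)" using x2 by (simp add: matrix_mul_assoc)
  also have "\<dots> = X ** transpose (B ** X)" using x3 by simp
  also have "\<dots> = X ** transpose X ** transpose B" by (simp add: matrix_transpose_mul matrix_mul_assoc)
  also have "\<dots> = X ** transpose X ** transpose (B ** Z ** B)" using z1 by simp
  also have "\<dots> = X ** transpose (B ** X) ** transpose (B ** Z)"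
    by (simp add: matrix_transpose_mul matrix_mul_assoc)
  also have "\<dots> = X ** (B ** X) ** (B ** Z)" using x3 z3 by simp
  also have "\<dots> = (X ** B ** X) ** B ** Z" by (simp add: matrix_mul_assoc)
  also have "\<dots> = X ** B ** Z" using x2 by simp
  finally have X: "X = X ** B ** Z" .
  have "Z = (Z ** B) ** Z" using z2 by simp
  also have "\<dots> = transpose (Z ** B) ** Z" using z4 by simp
  also have "\<dots> = transpose B ** transpose Z ** Z" by (simp add: matrix_transpose_mul)
  also have "\<dots> = transpose (B ** X ** B) ** transpose Z ** Z" using x1 by simp
  also have "\<dots> = transpose (X ** B) ** transpose (Z ** B) ** Z"
    by (simp add: matrix_transpose_mul matrix_mul_assoc)
  also have "\<dots> = (X ** B) ** (Z ** B) ** Z" using x4 z4 by simp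
  also have "\<dots> = X ** B ** (Z ** B ** Z)" by (simp add: matrix_mul_assoc)
  also have "\<dots> = X ** B ** Z" using z2 by simp
  finally show ?thesis using X by simp
qed

lemma weight_transpose: "weight W \<Longrightarrow> transpose W = W"
  by (simp add: weight_def)

lemma weight_square: "weight W \<Longrightarrow> W ** W = mat 1"
  by (simp add: weight_def)

lemma weight_mult_weight: "weight W \<Longrightarrow> W ** (W ** X) = X"
  by (simp add: weight_square matrix_mul_assoc)

lemma weight_mult_weight_right: "weight W \<Longrightarrow> X ** W ** W = X"
  by (simp add: weight_square flip: matrix_mul_assoc)

lemma weight_mult_weight_vec: "weight W \<Longrightarrow> W *v (W *v x) = x"
  by (simp add: weight_def matrix_vector_mul_assoc)

lemma weight_cancel_left: "weight W \<Longrightarrow> W ** X = W ** Y \<longleftrightarrow> X = Y"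
  by (metis weight_mult_weight)

lemma weight_cancel_right: "weight W \<Longrightarrow> X ** W = Y ** W \<longleftrightarrow> X = Y"
  by (metis weight_mult_weight_right)

lemma indefinite_penrose_iff:
  fixes B :: "real^'q^'p"
  assumes p: "weight Wp" and q: "weight Wq"
  shows "(iprod Wp (iprod Wq B X) B = B \<and>
      iprod Wq (iprod Wp X B) X = X \<and>
      iadj Wp Wp (iprod Wq B X) = iprod Wq B X \<and>
      iadj Wq Wq (iprod Wp X B) = iprod Wp X B)
    \<longleftrightarrow> moore_penrose B (Wq ** X ** Wp)"
proof -
  note simps = iprod_def iadj_def matrix_transpose_mul matrix_mul_assoc
    weight_transpose[OF p] weight_transpose[OF q] weight_mult_weight_right[OF p] weight_mult_weight_right[OF q]
    weight_square[OF p] weight_square[OF q]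
  have 1: "iprod Wp (iprod Wq B X) B = B \<longleftrightarrow> B ** (Wq ** X ** Wp) ** B = B"
    by (simp add: simps)
  have 2: "iprod Wq (iprod Wp X B) X = X \<longleftrightarrow>
      Wq ** X ** Wp ** B ** (Wq ** X ** Wp) = Wq ** X ** Wp"
    using weight_cancel_left[OF q, of "X ** Wp ** B ** Wq ** X ** Wp" "X ** Wp"]
      weight_cancel_right[OF p, of "X ** Wp ** B ** Wq ** X" X] by (simp add: simps)
  have 3: "iadj Wp Wp (iprod Wq B X) = iprod Wq B X \<longleftrightarrow>
      transpose (B ** (Wq ** X ** Wp)) = B ** (Wq ** X ** Wp)"
    using weight_cancel_right[OF p, of "Wp ** transpose (B ** Wq ** X) ** Wp" "B ** Wq ** X"]
    by (simp add: simps)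
  have 4: "iadj Wq Wq (iprod Wp X B) = iprod Wp X B \<longleftrightarrow>
      transpose (Wq ** X ** Wp ** B) = Wq ** X ** Wp ** B"
    using weight_cancel_left[OF q, of "Wq ** transpose (X ** Wp ** B) ** Wq" "X ** Wp ** B"]
    by (simp add: simps)
  show ?thesis
    unfolding moore_penrose_def 1 2 3 4 ..
qed

lemma impinv_moore_penrose:
  fixes B :: "real^'q^'p"
  assumes p: "weight Wp" and q: "weight Wq"
  shows "moore_penrose B (Wq ** impinv Wp Wq B ** Wp)"
proof -
  obtain Y where Y: "moore_penrose B Y"
    using moore_penrose_exists by blast
  have "\<exists>!X. moore_penrose B (Wq ** X ** Wp)"
  proof
    show "moore_penrose B (Wq ** (Wq ** Y ** Wp) ** Wp)"
      using Y by (simp add: matrix_mul_assoc weight_square[OF q] weight_mult_weight_right[OF p])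
    show "X = Wq ** Y ** Wp" if "moore_penrose B (Wq ** X ** Wp)" for X
    proof -
      have "X = Wq ** (Wq ** X ** Wp) ** Wp"
        by (simp add: matrix_mul_assoc weight_square[OF q] weight_mult_weight_right[OF p])
      then show ?thesis
        by (simp add: moore_penrose_unique[OF that Y])
    qed
  qed
  then show ?thesis
    unfolding impinv_def indefinite_penrose_iff[OF p q] by (rule theI')
qed

lemma iprodv_inner_inverse_eq:
  fixes B :: "real^'q^'p" and X :: "real^'p^'q"
  assumes BXB: "iprod Wp (iprod Wq B X) B = B" and y: "y \<in> irange Wq B"
    and k: "iprodv Wp X y = k + z" and z: "iprodv Wq B z = 0"
  shows "iprodv Wq B k = y"
proof -
  from y obtain u where u: "y = iprodv Wq B u"
    unfolding irange_def by blast
  have "iprodv Wq B k = iprodv Wq B (iprodv Wp X y - z)"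
    by (simp add: k)
  also have "\<dots> = iprodv Wq B (iprodv Wp X y) - iprodv Wq B z"
    by (simp add: iprodv_def matrix_vector_mult_diff_distrib)
  also have "\<dots> = iprodv Wq B (iprodv Wp X (iprodv Wq B u))"
    by (simp add: z u)
  also have "\<dots> = iprodv Wq (iprod Wp (iprod Wq B X) B) u"
    by (simp add: iprodv_def iprod_def matrix_vector_mul_assoc matrix_mul_assoc)
  also have "\<dots> = y"
    by (simp add: BXB u)
  finally show ?thesis .
qed

lemma iprod_iadj_self:
  fixes A :: "real^'q^'p"
  assumes "weight Wp"
  shows "iprod Wp (iadj Wp Wq A) A = Wq ** transpose A ** A"
  by (simp add: iprod_def iadj_def weight_mult_weight_right[OF assms])

lemma inull_iprod_mat1:
  fixes A :: "real^'q^'p"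
  assumes "weight Wq"
  shows "inull Wq (iprod Wq A (mat 1)) = {z. A *v z = 0}"
  by (simp add: inull_def iprodv_def iprod_def matrix_vector_mul_assoc
      weight_mult_weight_right[OF assms])

lemma irange_iadj_iprod_mat1:
  fixes A :: "real^'q^'p"
  assumes p: "weight Wp" and q: "weight Wq"
  shows "irange Wp (iadj Wp Wq (iprod Wq A (mat 1))) = range ((*v) (transpose A))"
proof -
  have "iadj Wp Wq (iprod Wq A (mat 1)) ** Wp = transpose A"
    by (simp add: iadj_def iprod_def matrix_transpose_mul weight_transpose[OF q]
        weight_mult_weight_right[OF p] weight_square[OF q] matrix_mul_assoc)
  then show ?thesis
    unfolding irange_def iprodv_def by (auto simp: matrix_vector_mul_assoc)
qed

lemma intertwining_transpose:
  fixes A :: "real^'n^'m"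
  assumes "weight M" and "weight N" and "M ** A = A ** N"
  shows "N ** transpose A = transpose A ** M"
  by (metis assms matrix_transpose_mul weight_transpose)

context
  fixes M :: "real^'m^'m" and N :: "real^'n^'n" and A :: "real^'n^'m"
  assumes M: "weight M" and N: "weight N" and MA: "M ** A = A ** N"
begin

lemma range_transpose_subset_irange_gram:
  "range ((*v) (transpose A)) \<subseteq> irange N (iprod M (iadj M N A) A)"
proof
  fix y assume "y \<in> range ((*v) (transpose A))"
  then obtain w where w: "y = transpose A *v w" by blast
  obtain u where u: "transpose A *v (A *v u) = transpose A *v (M *v w)"
    using normal_equation_solvable by blast
  have "y = N *v (N *v (transpose A *v w))"
    by (simp add: w weight_mult_weight_vec[OF N])
  also have "\<dots> = N *v (transpose A *v (M *v w))"
    by (simp only: matrix_vector_mul_assoc intertwining_transpose[OF M N MA])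
  also have "\<dots> = N *v (transpose A *v (A *v u))"
    by (simp only: u)
  also have "\<dots> = iprodv N (iprod M (iadj M N A) A) (N *v u)"
    by (simp add: iprodv_def iprod_iadj_self[OF M] weight_mult_weight_right[OF N]
        matrix_vector_mul_assoc matrix_mul_assoc del: vector_transpose_matrix)
  finally show "y \<in> irange N (iprod M (iadj M N A) A)"
    unfolding irange_def by blast
qed

lemma null_subset_inull_gram: "{z. A *v z = 0} \<subseteq> inull N (iprod M (iadj M N A) A)"
proof
  fix z assume "z \<in> {z. A *v z = 0}"
  then have Az: "A *v z = 0" by simp
  have "A *v (N *v z) = M *v (A *v z)"
    by (simp only: matrix_vector_mul_assoc MA)
  then show "z \<in> inull N (iprod M (iadj M N A) A)"
    by (simp add: Az inull_def iprodv_def iprod_iadj_self[OF M] flip: matrix_vector_mul_assoc)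
qed

end

theorem lemma3p13:
  fixes M :: "real^'m^'m" and N :: "real^'n^'n" and A :: "real^'n^'m"
    and K :: "(real^'n) set"
  assumes "weight M" and "weight N"
    and "M ** A = A ** N"
    and "is_cone K" and "closed K"
    and "iimage N (impinv N N (iprod M (iadj M N A) A)) (idual N K)
           \<subseteq> msum K (inull N (iprod N A (mat 1)))"
  shows "idual N K \<inter> irange M (iadj M N (iprod N A (mat 1)))
           \<subseteq> msum (iimage N (iprod M (iadj M N A) A) K) (inull N (iprod N A (mat 1)))"
proof
  let ?B = "iprod M (iadj M N A) A"
  let ?X = "impinv N N ?B"
  fix y assume y: "y \<in> idual N K \<inter> irange M (iadj M N (iprod N A (mat 1)))"
  then have "iprodv N ?X y \<in> iimage N ?X (idual N K)"
    unfolding iimage_def by blast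
  with assms(6) obtain k z where k: "k \<in> K" and z: "A *v z = 0" and kz: "iprodv N ?X y = k + z"
    unfolding msum_def inull_iprod_mat1[OF assms(2)] by blast
  have BXB: "iprod N (iprod N ?B ?X) ?B = ?B"
    using impinv_moore_penrose[OF assms(2) assms(2), of ?B]
    by (simp add: moore_penrose_def iprod_def matrix_mul_assoc)
  have "y \<in> irange N ?B"
    using y range_transpose_subset_irange_gram[OF assms(1-3)]
    unfolding irange_iadj_iprod_mat1[OF assms(1,2)] by blast
  moreover have "iprodv N ?B z = 0"
    using z null_subset_inull_gram[OF assms(1-3)] unfolding inull_def by blast
  ultimately have "iprodv N ?B k = y"
    using iprodv_inner_inverse_eq[OF BXB _ kz] by blast
  moreover have "0 \<in> inull N (iprod N A (mat 1))"
    by (simp add: inull_iprod_mat1[OF assms(2)])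
  ultimately show "y \<in> msum (iimage N ?B K) (inull N (iprod N A (mat 1)))"
    unfolding msum_def iimage_def using k by force
qed

end
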